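(* Under the standing assumptions below, for all $\mu,\nu,\alpha\in\{0,1,2,3\}$ and all $(x^0,x)\in\mathbb R^4$, $$|H^{\mu\nu}(x^0,x)|+\lambda|\partial_{x^\alpha}H^{\mu\nu}(x^0,x)|\le C\delta_h\frac{(1+\lambda^{-1}|x^0|)^{\delta_h}}{1+\lambda^{-1}|x^0|+\lambda^{-1}|x|}.$$
   Context: $g_{\alpha\beta}$ is a Lorentzian metric on $\mathbb R^4$ (coordinates $(x^0,x)$) with $h_{\alpha\beta}=g_{\alpha\beta}-\eta_{\alpha\beta}$, $\eta=\mathrm{diag}(-1,1,1,1)$, and $H^{\alpha\beta}=g^{\alpha\beta}-\eta^{\alpha\beta}$. Standing assumptions: $\lambda>0$; $M$ is the ADM mass with $\frac{GM}{c^2\lambda}<\varepsilon_h$, $\delta_h=C_0\varepsilon_h$ with $\varepsilon_h$ sufficiently small; $h=h^0+h^1$ with $h^0_{\mu\nu}=\chi(\frac{|x|}{\lambda+|x^0|})\frac{GM}{c^2|x|}\delta_{\mu\nu}$ ($\chi$ smooth, $0\le\chi\le1$, $\chi=0$ on $[0,\frac12]$, $\chi=1$ on $[\frac34,\infty)$), and $|\partial^\kappa h^1_{\mu\nu}(x^0,x)|\le\lambda^{-|\kappa|}\frac{\delta_h(1+\lambda^{-1}|x^0|)^{\delta_h}}{(1+\lambda^{-1}(|x|+|x^0|))(1+\lambda^{-1}(|x|-|x^0|)_+)^{\gamma_0}}$ for $|\kappa|\le4$, with $\gamma_0\in[\frac34,1)$. $C$ is a constant independent of $(x^0,x)$. 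*)

theory Defs
  imports "HOL-Analysis.Analysis"
begin

text \<open>Points of R^4 are vectors p :: real^4 with p$0 = x^0 and (p$1,p$2,p$3) = x.\<close>

definition eta :: "real^4^4" where
  "eta = (\<chi> i j. if i = j then (if i = 0 then -1 else 1) else 0)"

text \<open>Lorentzian: congruent (Sylvester) to the Minkowski matrix.\<close>
definition lorentzian :: "real^4^4 \<Rightarrow> bool" where
  "lorentzian A \<longleftrightarrow> (\<exists>P. invertible P \<and> transpose P ** A ** P = eta)"

definition spnorm :: "real^4 \<Rightarrow> real" where
  "spnorm p = sqrt ((p$1)^2 + (p$2)^2 + (p$3)^2)"

text \<open>Coordinate partial derivative d/dx^i and iterated partial derivatives
  (a multi-index kappa is a list of coordinate indices, |kappa| = length).\<close>
definition pd :: "4 \<Rightarrow> (real^4 \<Rightarrow> real) \<Rightarrow> real^4 \<Rightarrow> real" where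
  "pd i f p = deriv (\<lambda>t. f (p + t *\<^sub>R axis i 1)) 0"

fun ipd :: "4 list \<Rightarrow> (real^4 \<Rightarrow> real) \<Rightarrow> real^4 \<Rightarrow> real" where
  "ipd [] f = f"
| "ipd (i # k) f = pd i (ipd k f)"

definition smooth_fun :: "(real \<Rightarrow> real) \<Rightarrow> bool" where
  "smooth_fun f \<longleftrightarrow> (\<forall>n x. (deriv ^^ n) f differentiable (at x))"

text \<open>h^0 with m = GM/c^2.\<close>
definition h0 :: "(real \<Rightarrow> real) \<Rightarrow> real \<Rightarrow> real \<Rightarrow> real^4 \<Rightarrow> real^4^4" where
  "h0 cutoff m lam p = (\<chi> \<mu> \<nu>. if \<mu> = \<nu> then cutoff (spnorm p / (lam + \<bar>p$0\<bar>)) * m / spnorm p else 0)"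

definition h1 :: "(real \<Rightarrow> real) \<Rightarrow> real \<Rightarrow> real \<Rightarrow> (real^4 \<Rightarrow> real^4^4) \<Rightarrow> real^4 \<Rightarrow> real^4^4" where
  "h1 cutoff m lam g p = g p - eta - h0 cutoff m lam p"

definition Hinv :: "(real^4 \<Rightarrow> real^4^4) \<Rightarrow> real^4 \<Rightarrow> real^4^4" where
  "Hinv g p = matrix_inv (g p) - matrix_inv eta"

end

theory Submission
  imports Defs
begin

text \<open>
  Write g = eta + h^0 + h^1 and let weight be the right-hand side of the estimate without the constant C.
  Both perturbations are bounded by multiples of weight, together with lam times their derivatives along
  coordinate lines: h^1 by hypothesis, and h^0 because GM/(c^2 lam) < eps_h and the cutoff kills h^0
  unless |x| > (lam + |x^0|)/2. For eps_h small the entries of h = g - eta are at most 1/8, and the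
  identity g^-1 = eta - eta h g^-1 then bounds g^-1 entrywise, giving |H| <= 8 max |h|. Derivatives
  of H are controlled through the resolvent identity g1^-1 - g2^-1 = g1^-1 (g2 - g1) g2^-1 applied to
  difference quotients along a coordinate line; one-sided derivatives of g suffice there, which
  matters because |x^0| is only one-sidedly differentiable at x^0 = 0.
\<close>

lemma
  fixes A :: "'a::semiring_1^'n^'m"
  assumes "invertible A"
  shows matrix_inv_right: "A ** matrix_inv A = mat 1"
    and matrix_inv_left: "matrix_inv A ** A = mat 1"
  using someI_ex[OF assms[unfolded invertible_def]] unfolding matrix_inv_def by auto

lemma matrix_inv_unique:
  fixes A :: "'a::semiring_1^'n^'n"
  assumes "A ** B = mat 1" "B ** A = mat 1"
  shows "matrix_inv A = B"
proof -
  have inv: "invertible A" using assms unfolding invertible_def by blast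
  have "matrix_inv A = (matrix_inv A ** A) ** B"
    by (simp add: assms(1) flip: matrix_mul_assoc)
  then show ?thesis by (simp add: matrix_inv_left[OF inv])
qed

lemma matrix_diff_ldistrib: "(A::'a::ring_1^'n^'m) ** (B - C) = A ** B - A ** C"
  by (vector matrix_matrix_mult_def sum_subtractf[symmetric] field_simps)

lemma matrix_diff_rdistrib: "((A::'a::ring_1^'n^'m) - B) ** C = A ** C - B ** C"
  by (vector matrix_matrix_mult_def sum_subtractf[symmetric] field_simps)

lemma abs_matrix_mult_entry_le:
  "\<bar>((A::real^'n^'m) ** B) $ i $ j\<bar> \<le> (\<Sum>l\<in>UNIV. \<bar>A $ i $ l\<bar> * \<bar>B $ l $ j\<bar>)"
  unfolding matrix_matrix_mult_def by (simp add: order_trans[OF sum_abs] abs_mult)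

lemma eta_mult_entry: "(eta ** M) $ i $ j = (if i = 0 then -1 else 1) * (M $ i $ j :: real)"
  unfolding matrix_matrix_mult_def eta_def
  by (simp add: if_distrib[of "\<lambda>x. x * _"] sum.delta cong: if_cong)

lemma abs_eta_mult_entry: "\<bar>(eta ** M) $ i $ j\<bar> = \<bar>M $ i $ j\<bar>"
  by (simp add: eta_mult_entry abs_mult)

lemma eta_mult_eta: "eta ** eta = mat 1"
  by (simp add: vec_eq_iff eta_mult_entry mat_def del: One_nat_def) (simp add: eta_def)

lemma matrix_inv_eta: "matrix_inv eta = eta"
  by (rule matrix_inv_unique) (fact eta_mult_eta)+

lemma lorentzian_imp_invertible:
  assumes "lorentzian A"
  shows "invertible A"
proof -
  obtain P where "transpose P ** A ** P = eta"
    using assms unfolding lorentzian_def by blast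
  moreover have "det eta \<noteq> 0"
    using eta_mult_eta invertible_det_nz unfolding invertible_def by blast
  ultimately have "det (transpose P) * det A * det P \<noteq> 0" by (metis det_mul)
  then have "det A \<noteq> 0" by auto
  then show ?thesis using invertible_det_nz by blast
qed

lemma matrix_inv_eq_eta_minus:
  assumes "invertible g"
  shows "matrix_inv g = eta - eta ** ((g - eta) ** matrix_inv g)"
proof -
  have "eta ** matrix_inv g = (g - (g - eta)) ** matrix_inv g" by simp
  also have "\<dots> = mat 1 - (g - eta) ** matrix_inv g"
    by (simp only: matrix_diff_rdistrib matrix_inv_right[OF assms])
  finally have "matrix_inv g = eta ** (mat 1 - (g - eta) ** matrix_inv g)"
    by (metis eta_mult_eta matrix_mul_assoc matrix_mul_lid)
  then show ?thesis by (simp add: matrix_diff_ldistrib)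
qed

lemma matrix_inv_entry_bound:
  assumes "invertible g" and small: "\<And>i j. \<bar>(g - eta) $ i $ j\<bar> \<le> 1/8"
  shows "\<bar>matrix_inv g $ i $ j\<bar> \<le> 2"
proof -
  let ?X = "matrix_inv g"
  have eq: "?X = eta - eta ** ((g - eta) ** ?X)" by (rule matrix_inv_eq_eta_minus[OF assms(1)])
  have entry: "\<bar>?X $ i $ j\<bar> \<le> 1 + (\<Sum>l\<in>UNIV. \<bar>?X $ l $ j\<bar>) / 8" for i j
  proof -
    have "?X $ i $ j = eta $ i $ j - (eta ** ((g - eta) ** ?X)) $ i $ j"
      using arg_cong[where f="\<lambda>M. M $ i $ j", OF eq] by simp
    then have "\<bar>?X $ i $ j\<bar> \<le> \<bar>eta $ i $ j\<bar> + \<bar>((g - eta) ** ?X) $ i $ j\<bar>"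
      by (metis abs_triangle_ineq4 abs_eta_mult_entry)
    also have "\<dots> \<le> 1 + (\<Sum>l\<in>UNIV. \<bar>(g - eta) $ i $ l\<bar> * \<bar>?X $ l $ j\<bar>)"
      by (intro add_mono abs_matrix_mult_entry_le) (simp add: eta_def)
    also have "\<dots> \<le> 1 + (\<Sum>l\<in>UNIV. 1/8 * \<bar>?X $ l $ j\<bar>)"
      by (intro add_left_mono sum_mono mult_right_mono small) simp
    finally show ?thesis by (simp add: sum_divide_distrib)
  qed
  \<comment> \<open>summing the entrywise bound over a column absorbs half of the column sum\<close>
  have "(\<Sum>l\<in>UNIV. \<bar>?X $ l $ j\<bar>) \<le> (\<Sum>l\<in>(UNIV::4 set). 1 + (\<Sum>l\<in>UNIV. \<bar>?X $ l $ j\<bar>) / 8)"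
    by (intro sum_mono entry)
  then have "(\<Sum>l\<in>UNIV. \<bar>?X $ l $ j\<bar>) \<le> 8" by simp
  then show ?thesis using entry[of i j] by simp
qed

lemma matrix_inv_minus_eta_bound:
  assumes "invertible g" "\<And>i j. \<bar>(g - eta) $ i $ j\<bar> \<le> 1/8"
  shows "\<bar>(matrix_inv g - eta) $ i $ j\<bar> \<le> 2 * (\<Sum>l\<in>UNIV. \<bar>(g - eta) $ i $ l\<bar>)"
proof -
  have "\<bar>(matrix_inv g - eta) $ i $ j\<bar> = \<bar>((g - eta) ** matrix_inv g) $ i $ j\<bar>"
    by (subst matrix_inv_eq_eta_minus[OF assms(1)]) (simp add: abs_eta_mult_entry)
  also have "\<dots> \<le> (\<Sum>l\<in>UNIV. \<bar>(g - eta) $ i $ l\<bar> * \<bar>matrix_inv g $ l $ j\<bar>)"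
    by (rule abs_matrix_mult_entry_le)
  also have "\<dots> \<le> (\<Sum>l\<in>UNIV. \<bar>(g - eta) $ i $ l\<bar> * 2)"
    by (intro sum_mono mult_left_mono matrix_inv_entry_bound assms) auto
  finally show ?thesis by (simp add: sum_distrib_left mult.commute)
qed

lemma matrix_inv_diff_bound:
  assumes "invertible g1" "invertible g2"
    and "\<And>i j. \<bar>(g1 - eta) $ i $ j\<bar> \<le> 1/8" "\<And>i j. \<bar>(g2 - eta) $ i $ j\<bar> \<le> 1/8"
  shows "\<bar>(matrix_inv g1 - matrix_inv g2) $ i $ j\<bar> \<le> 4 * (\<Sum>k\<in>UNIV. \<Sum>l\<in>UNIV. \<bar>(g1 - g2) $ k $ l\<bar>)"
proof -
  let ?X = "matrix_inv g1" and ?Y = "matrix_inv g2"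
  have "?X ** (g2 - g1) ** ?Y = ?X ** (g2 ** ?Y) - (?X ** g1) ** ?Y"
    by (simp add: matrix_diff_ldistrib matrix_diff_rdistrib matrix_mul_assoc)
  then have resolvent: "?X - ?Y = ?X ** ((g2 - g1) ** ?Y)"
    by (simp add: matrix_inv_left matrix_inv_right assms matrix_mul_assoc)
  have "\<bar>(?X - ?Y) $ i $ j\<bar> \<le> (\<Sum>k\<in>UNIV. \<bar>?X $ i $ k\<bar> * (\<Sum>l\<in>UNIV. \<bar>(g2 - g1) $ k $ l\<bar> * \<bar>?Y $ l $ j\<bar>))"
    unfolding resolvent
    by (rule order_trans[OF abs_matrix_mult_entry_le])
       (intro sum_mono mult_left_mono abs_matrix_mult_entry_le abs_ge_zero)
  also have "\<dots> \<le> (\<Sum>k\<in>UNIV. 2 * (\<Sum>l\<in>UNIV. \<bar>(g1 - g2) $ k $ l\<bar> * 2))"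
    by (intro sum_mono mult_mono matrix_inv_entry_bound assms sum_nonneg)
       (auto simp: abs_minus_commute)
  finally show ?thesis by (simp add: sum_distrib_left sum_distrib_right mult.commute mult.left_commute)
qed

lemma matrix_inv_deriv_bound:
  fixes G :: "real \<Rightarrow> real^4^4"
  assumes inv: "\<And>t. invertible (G t)" and small: "\<And>t i j. \<bar>(G t - eta) $ i $ j\<bar> \<le> 1/8"
    and nontrivial: "at x within S \<noteq> bot"
    and deriv_G: "\<And>k l. ((\<lambda>t. G t $ k $ l) has_real_derivative E k l) (at x within S)"
    and deriv_inv: "((\<lambda>t. matrix_inv (G t) $ \<mu> $ \<nu>) has_real_derivative D) (at x within S)"
  shows "\<bar>D\<bar> \<le> 4 * (\<Sum>k\<in>UNIV. \<Sum>l\<in>UNIV. \<bar>E k l\<bar>)"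
proof (rule tendsto_le[OF nontrivial])
  let ?dq = "\<lambda>f t. (f t - f x) / (t - x)"
  show "((\<lambda>t. \<bar>?dq (\<lambda>t. matrix_inv (G t) $ \<mu> $ \<nu>) t\<bar>) \<longlongrightarrow> \<bar>D\<bar>) (at x within S)"
    using deriv_inv unfolding has_field_derivative_iff by (rule tendsto_rabs)
  show "((\<lambda>t. 4 * (\<Sum>k\<in>UNIV. \<Sum>l\<in>UNIV. \<bar>?dq (\<lambda>t. G t $ k $ l) t\<bar>))
      \<longlongrightarrow> 4 * (\<Sum>k\<in>UNIV. \<Sum>l\<in>UNIV. \<bar>E k l\<bar>)) (at x within S)"
    using deriv_G unfolding has_field_derivative_iff by (intro tendsto_intros)
  show "\<forall>\<^sub>F t in at x within S. \<bar>?dq (\<lambda>t. matrix_inv (G t) $ \<mu> $ \<nu>) t\<bar>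
      \<le> 4 * (\<Sum>k\<in>UNIV. \<Sum>l\<in>UNIV. \<bar>?dq (\<lambda>t. G t $ k $ l) t\<bar>)"
  proof (intro always_eventually allI)
    fix t
    have "\<bar>matrix_inv (G t) $ \<mu> $ \<nu> - matrix_inv (G x) $ \<mu> $ \<nu>\<bar>
        \<le> 4 * (\<Sum>k\<in>UNIV. \<Sum>l\<in>UNIV. \<bar>G t $ k $ l - G x $ k $ l\<bar>)"
      using matrix_inv_diff_bound[OF inv inv small small] by simp
    then show "\<bar>?dq (\<lambda>t. matrix_inv (G t) $ \<mu> $ \<nu>) t\<bar>
        \<le> 4 * (\<Sum>k\<in>UNIV. \<Sum>l\<in>UNIV. \<bar>?dq (\<lambda>t. G t $ k $ l) t\<bar>)"
      by (simp add: abs_divide sum_divide_distrib[symmetric] divide_right_mono)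
  qed
qed

lemma spnorm_nonneg: "spnorm p \<ge> 0"
  by (simp add: spnorm_def)

lemma spnorm_line:
  "spnorm (p + t *\<^sub>R axis i 1) = sqrt ((p$1 + t * axis i 1 $ 1)\<^sup>2 + (p$2 + t * axis i 1 $ 2)\<^sup>2 + (p$3 + t * axis i 1 $ 3)\<^sup>2)"
  by (simp add: spnorm_def)

lemma isCont_spnorm_line: "isCont (\<lambda>t. spnorm (p + t *\<^sub>R axis i 1)) t"
  unfolding spnorm_line by (intro continuous_intros)

lemma spnorm_line_deriv:
  assumes "spnorm p > 0"
  obtains S' where "((\<lambda>t. spnorm (p + t *\<^sub>R axis i 1)) has_real_derivative S') (at 0)" "\<bar>S'\<bar> \<le> 1"
proof -
  define c where "c k = axis i (1::real) $ k" for k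
  have sp: "spnorm p = sqrt ((p$1)\<^sup>2 + (p$2)\<^sup>2 + (p$3)\<^sup>2)" by (simp add: spnorm_def)
  have "((\<lambda>t. spnorm (p + t *\<^sub>R axis i 1)) has_real_derivative
      (p$1 * c 1 + p$2 * c 2 + p$3 * c 3) / spnorm p) (at 0)"
    using assms unfolding spnorm_line c_def sp
    by (auto intro!: derivative_eq_intros simp: field_simps power2_eq_square)
  moreover have "\<bar>p$1 * c 1 + p$2 * c 2 + p$3 * c 3\<bar> \<le> spnorm p"
  proof -
    have "\<bar>p$1\<bar> \<le> spnorm p" "\<bar>p$2\<bar> \<le> spnorm p" "\<bar>p$3\<bar> \<le> spnorm p"
      unfolding sp by (rule real_le_rsqrt; simp add: power2_abs)+
    \<comment> \<open>at most one of the spatial components of an axis vector is nonzero\<close>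
    then show ?thesis using exhaust_4[of i] assms by (auto simp: c_def axis_def)
  qed
  then have "\<bar>(p$1 * c 1 + p$2 * c 2 + p$3 * c 3) / spnorm p\<bar> \<le> 1"
    using assms by (simp add: abs_divide divide_le_eq)
  ultimately show ?thesis using that by blast
qed

lemma abs_affine_right_deriv:
  fixes a c :: real
  assumes "c \<ge> 0"
  obtains T' where "((\<lambda>t. \<bar>a + t * c\<bar>) has_real_derivative T') (at_right 0)" "\<bar>T'\<bar> \<le> c"
proof (cases "a \<ge> 0")
  case True
  have ev: "\<forall>\<^sub>F t in at_right 0. a + t * c = \<bar>a + t * c\<bar>"
    by (rule eventually_at_rightI[of 0 1]) (use True assms in auto)
  have "((\<lambda>t. a + t * c) has_real_derivative c) (at_right 0)"
    by (auto intro!: derivative_eq_intros)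
  then have "((\<lambda>t. \<bar>a + t * c\<bar>) has_real_derivative c) (at_right 0)"
    using has_field_derivative_cong_eventually[OF ev] True by simp
  then show ?thesis using that assms by simp
next
  case False
  have "((\<lambda>t. a + t * c) \<longlongrightarrow> a + 0 * c) (at_right 0)" by (intro tendsto_intros)
  then have "\<forall>\<^sub>F t in at_right 0. a + t * c < 0" using False by (simp add: order_tendstoD)
  then have ev: "\<forall>\<^sub>F t in at_right 0. - (a + t * c) = \<bar>a + t * c\<bar>"
    by (rule eventually_mono) simp
  have "((\<lambda>t. - (a + t * c)) has_real_derivative - c) (at_right 0)"
    by (auto intro!: derivative_eq_intros)
  then have "((\<lambda>t. \<bar>a + t * c\<bar>) has_real_derivative - c) (at_right 0)"
    using has_field_derivative_cong_eventually[OF ev] False by simp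
  then show ?thesis using that assms by simp
qed

lemma abs_time_line_right_deriv:
  obtains T' where "((\<lambda>t. \<bar>(p + t *\<^sub>R axis i 1) $ 0\<bar>) has_real_derivative T') (at_right 0)" "\<bar>T'\<bar> \<le> 1"
proof -
  have c: "0 \<le> axis i (1::real) $ 0" "axis i (1::real) $ 0 \<le> 1" by (simp_all add: axis_def)
  obtain T' where "((\<lambda>t. \<bar>p $ 0 + t * axis i 1 $ 0\<bar>) has_real_derivative T') (at_right 0)"
    "\<bar>T'\<bar> \<le> axis i 1 $ 0"
    using abs_affine_right_deriv[OF c(1)] .
  with c(2) show ?thesis using that by simp
qed

lemma chain_term_estimate:
  fixes lam D S0 S' T' c' B m :: real
  assumes "0 < lam" "lam \<le> D" "D \<le> 2 * S0" "\<bar>S'\<bar> \<le> 1" "\<bar>T'\<bar> \<le> 1" "\<bar>c'\<bar> \<le> B" "m \<ge> 0"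
    and "S0 \<le> D \<or> c' = 0"
  shows "lam * (\<bar>c'\<bar> * \<bar>(S' * D - S0 * T') / (D * D)\<bar> * m / S0) \<le> 8 * B * m / (D + S0)"
proof (cases "c' = 0")
  case True
  then show ?thesis using assms by (simp add: add_pos_pos)
next
  case False
  then have S0: "S0 \<le> D" using assms(8) by blast
  have pos: "D > 0" "S0 > 0" "B \<ge> 0" using assms by linarith+
  have "\<bar>S' * D - S0 * T'\<bar> \<le> \<bar>S'\<bar> * D + S0 * \<bar>T'\<bar>"
    using pos by (metis abs_mult abs_of_pos abs_triangle_ineq4)
  also have "\<dots> \<le> 2 * D"
    using assms S0 pos by (smt (verit) mult_left_le mult_left_le_one_le)
  finally have "\<bar>(S' * D - S0 * T') / (D * D)\<bar> \<le> 2 / D"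
    using pos by (simp add: abs_divide divide_le_eq field_simps)
  then have "\<bar>c'\<bar> * \<bar>(S' * D - S0 * T') / (D * D)\<bar> * m / S0 \<le> B * (2 / D) * m / (D / 2)"
    using assms pos by (intro frac_le mult_mono mult_right_mono) auto
  also have "\<dots> = 4 * B * m / (D * D)" using pos by (simp add: field_simps)
  finally have "lam * (\<bar>c'\<bar> * \<bar>(S' * D - S0 * T') / (D * D)\<bar> * m / S0) \<le> D * (4 * B * m / (D * D))"
    using assms pos by (intro mult_mono) auto
  also have "\<dots> = 8 * B * m / (2 * D)" using pos by (simp add: field_simps)
  also have "\<dots> \<le> 8 * B * m / (D + S0)"
    using assms pos S0 by (intro divide_left_mono) auto
  finally show ?thesis .
qed

lemma quotient_term_estimate:
  fixes lam D S0 S' k m :: real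
  assumes "0 < lam" "lam \<le> D" "D \<le> 2 * S0" "\<bar>S'\<bar> \<le> 1" "0 \<le> k" "k \<le> 1" "m \<ge> 0"
  shows "lam * (k * m * \<bar>S'\<bar> / (S0 * S0)) \<le> 6 * m / (D + S0)"
proof -
  have S0: "S0 > 0" using assms by linarith
  have "k * \<bar>S'\<bar> \<le> 1" using assms by (intro mult_le_one) auto
  then have "k * m * \<bar>S'\<bar> \<le> m"
    using mult_left_le[of "k * \<bar>S'\<bar>" m] assms by (simp add: algebra_simps)
  then have "lam * (k * m * \<bar>S'\<bar> / (S0 * S0)) \<le> (2 * S0) * (m / (S0 * S0))"
    using assms S0 by (intro mult_mono divide_right_mono) auto
  also have "\<dots> = 6 * m / (3 * S0)" using S0 by (simp add: field_simps)
  also have "\<dots> \<le> 6 * m / (D + S0)"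
    using assms S0 by (intro divide_left_mono) auto
  finally show ?thesis .
qed

locale cutoff_function =
  fixes cutoff :: "real \<Rightarrow> real"
  assumes smooth: "smooth_fun cutoff"
    and in_unit_interval: "\<And>s. 0 \<le> cutoff s \<and> cutoff s \<le> 1"
    and vanishes_near_0: "\<And>s. s \<in> {0..1/2} \<Longrightarrow> cutoff s = 0"
    and equals_1_far: "\<And>s. s \<ge> 3/4 \<Longrightarrow> cutoff s = 1"
begin

definition slope :: real where
  "slope = (SUP s\<in>{0..1}. \<bar>deriv cutoff s\<bar>)"

lemma has_deriv: "(cutoff has_real_derivative deriv cutoff s) (at s)"
  using smooth unfolding smooth_fun_def
  by (metis DERIV_deriv_iff_real_differentiable funpow_0)

lemma deriv_eq_0: "s > 3/4 \<Longrightarrow> deriv cutoff s = 0"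
  by (rule DERIV_local_const[OF has_deriv, of "s - 3/4"]) (auto simp: equals_1_far)

lemma abs_deriv_le_slope:
  assumes "s \<in> {0..1}"
  shows "\<bar>deriv cutoff s\<bar> \<le> slope"
proof -
  have "isCont (deriv cutoff) x" for x
    using smooth unfolding smooth_fun_def
    by (metis One_nat_def differentiable_imp_continuous_within funpow.simps funpow_0 o_apply)
  then have "continuous_on {0..1} (\<lambda>s. \<bar>deriv cutoff s\<bar>)"
    by (intro continuous_at_imp_continuous_on continuous_intros) auto
  then have "bdd_above ((\<lambda>s. \<bar>deriv cutoff s\<bar>) ` {0..1})"
    by (intro bounded_imp_bdd_above compact_imp_bounded compact_continuous_image compact_Icc)
  then show ?thesis unfolding slope_def using assms by (rule cSUP_upper2) simp
qed

lemma slope_nonneg: "slope \<ge> 0"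
  using abs_deriv_le_slope[of 0] by simp

text \<open>With S = |x| and T = |x^0|, the expression cutoff (S / (lam + T)) * m / S is a diagonal
  entry of h^0.\<close>

lemma profile_bound:
  assumes "lam > 0" "m \<ge> 0" "S \<ge> 0" "T \<ge> 0"
  shows "\<bar>cutoff (S / (lam + T)) * m / S\<bar> \<le> 3 * m / (lam + T + S)"
proof (cases "S / (lam + T) \<le> 1/2")
  case True
  then show ?thesis using assms vanishes_near_0 by simp
next
  case False
  then have S: "lam + T + S < 3 * S" using assms by (simp add: field_simps)
  have "\<bar>cutoff (S / (lam + T)) * m / S\<bar> \<le> m / S"
    using in_unit_interval[of "S / (lam + T)"] assms S
    by (simp add: abs_mult mult_left_le_one_le divide_right_mono)
  also have "\<dots> = 3 * m / (3 * S)" by simp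
  also have "\<dots> \<le> 3 * m / (lam + T + S)"
    using S assms by (intro divide_left_mono) auto
  finally show ?thesis .
qed

lemma profile_right_deriv_inner:
  assumes "lam > 0" "\<And>t. S t \<ge> 0" "\<And>t. T t \<ge> 0"
    and "(S \<longlongrightarrow> S 0) (at_right 0)" "(T \<longlongrightarrow> T 0) (at_right 0)"
    and "S 0 / (lam + T 0) < 1/2"
  shows "((\<lambda>t. cutoff (S t / (lam + T t)) * m / S t) has_real_derivative 0) (at_right 0)"
proof -
  have "lam + T 0 \<noteq> 0" using assms(1) assms(3)[of 0] by linarith
  then have "((\<lambda>t. S t / (lam + T t)) \<longlongrightarrow> S 0 / (lam + T 0)) (at_right 0)"
    using assms by (intro tendsto_intros)
  then have "\<forall>\<^sub>F t in at_right 0. S t / (lam + T t) < 1/2"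
    using assms(6) by (rule order_tendstoD)
  then have "\<forall>\<^sub>F t in at_right 0. cutoff (S t / (lam + T t)) * m / S t = 0"
    by (rule eventually_mono) (use assms in \<open>simp add: vanishes_near_0 add_pos_nonneg\<close>)
  moreover have "cutoff (S 0 / (lam + T 0)) * m / S 0 = 0"
    using assms by (simp add: vanishes_near_0 add_pos_nonneg)
  ultimately show ?thesis
    by (subst has_field_derivative_cong_eventually[where g="\<lambda>_. 0"]) auto
qed

lemma profile_has_right_deriv:
  assumes "S 0 > 0" "lam + T 0 > 0"
    and "(S has_real_derivative S') (at 0)" "(T has_real_derivative T') (at_right 0)"
  shows "((\<lambda>t. cutoff (S t / (lam + T t)) * m / S t) has_real_derivative
      deriv cutoff (S 0 / (lam + T 0)) * ((S' * (lam + T 0) - S 0 * T') / ((lam + T 0) * (lam + T 0)))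
        * m / S 0 - cutoff (S 0 / (lam + T 0)) * m * S' / (S 0 * S 0)) (at_right 0)"
proof -
  define k where "k = cutoff (S 0 / (lam + T 0))"
  define c' where "c' = deriv cutoff (S 0 / (lam + T 0))"
  define s' where "s' = (S' * (lam + T 0) - S 0 * T') / ((lam + T 0) * (lam + T 0))"
  have "((\<lambda>t. S t / (lam + T t)) has_real_derivative s') (at_right 0)"
    unfolding s'_def using assms
    by (intro DERIV_divide has_field_derivative_at_within[OF assms(3)]
        DERIV_add[OF DERIV_const assms(4), simplified]) simp
  then have "((\<lambda>t. cutoff (S t / (lam + T t))) has_real_derivative c' * s') (at_right 0)"
    unfolding c'_def using DERIV_chain'[OF _ has_deriv] by blast
  then have "((\<lambda>t. cutoff (S t / (lam + T t)) * m / S t) has_real_derivative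
      ((c' * s' * m) * S 0 - (k * m) * S') / (S 0 * S 0)) (at_right 0)"
    unfolding k_def using assms(1)
    by (intro DERIV_divide DERIV_cmult_right has_field_derivative_at_within[OF assms(3)]) auto
  moreover have "((c' * s' * m) * S 0 - (k * m) * S') / (S 0 * S 0) = c' * s' * m / S 0 - k * m * S' / (S 0 * S 0)"
    using assms(1) by (simp add: field_simps)
  ultimately show ?thesis by (simp add: k_def c'_def s'_def)
qed

lemma profile_right_deriv_outer:
  assumes "lam > 0" "m \<ge> 0" "T 0 \<ge> 0"
    and S: "(S has_real_derivative S') (at 0)" "\<bar>S'\<bar> \<le> 1"
    and T: "(T has_real_derivative T') (at_right 0)" "\<bar>T'\<bar> \<le> 1"
    and "S 0 / (lam + T 0) \<ge> 1/2"
  obtains E where "((\<lambda>t. cutoff (S t / (lam + T t)) * m / S t) has_real_derivative E) (at_right 0)"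
    "lam * \<bar>E\<bar> \<le> (8 * slope + 6) * m / (lam + T 0 + S 0)"
proof -
  define D where "D = lam + T 0"
  define s0 where "s0 = S 0 / D"
  define s' where "s' = (S' * D - S 0 * T') / (D * D)"
  define c' where "c' = deriv cutoff s0"
  define E where "E = c' * s' * m / S 0 - cutoff s0 * m * S' / (S 0 * S 0)"
  have D: "lam \<le> D" "D \<le> 2 * S 0" "D > 0" using assms by (auto simp: D_def field_simps)
  have deriv: "((\<lambda>t. cutoff (S t / (lam + T t)) * m / S t) has_real_derivative E) (at_right 0)"
    unfolding E_def c'_def s'_def s0_def D_def
    by (rule profile_has_right_deriv[OF _ _ S(1) T(1)]) (use D in \<open>simp_all add: D_def\<close>)
  have c': "\<bar>c'\<bar> \<le> slope \<and> (S 0 \<le> D \<or> c' = 0)"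
  proof (cases "s0 > 3/4")
    case True
    then show ?thesis by (simp add: c'_def deriv_eq_0 slope_nonneg)
  next
    case False
    then have "s0 \<in> {0..1}" "S 0 \<le> D" using D by (auto simp: s0_def field_simps)
    then show ?thesis by (simp add: c'_def abs_deriv_le_slope)
  qed
  have "\<bar>E\<bar> \<le> \<bar>c'\<bar> * \<bar>s'\<bar> * m / S 0 + cutoff s0 * m * \<bar>S'\<bar> / (S 0 * S 0)"
    using abs_triangle_ineq4[of "c' * s' * m / S 0" "cutoff s0 * m * S' / (S 0 * S 0)"]
      assms in_unit_interval[of s0]
    by (simp add: E_def abs_mult abs_divide)
  then have "lam * \<bar>E\<bar> \<le> lam * (\<bar>c'\<bar> * \<bar>s'\<bar> * m / S 0) + lam * (cutoff s0 * m * \<bar>S'\<bar> / (S 0 * S 0))"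
    using assms(1) by (metis distrib_left mult_left_mono less_imp_le)
  also have "\<dots> \<le> 8 * slope * m / (D + S 0) + 6 * m / (D + S 0)"
    unfolding s'_def using assms D c' in_unit_interval[of s0]
    by (intro add_mono chain_term_estimate quotient_term_estimate) auto
  also have "\<dots> = (8 * slope + 6) * m / (lam + T 0 + S 0)"
    by (simp add: D_def add_divide_distrib ring_distribs)
  finally show ?thesis using that deriv by blast
qed

lemma profile_right_deriv:
  assumes "lam > 0" "m \<ge> 0" "\<And>t. S t \<ge> 0" "isCont S 0"
    and S: "S 0 > 0 \<Longrightarrow> \<exists>S'. (S has_real_derivative S') (at 0) \<and> \<bar>S'\<bar> \<le> 1"
    and "\<And>t. T t \<ge> 0" and T: "(T has_real_derivative T') (at_right 0)" "\<bar>T'\<bar> \<le> 1"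
  obtains E where "((\<lambda>t. cutoff (S t / (lam + T t)) * m / S t) has_real_derivative E) (at_right 0)"
    "lam * \<bar>E\<bar> \<le> (8 * slope + 6) * m / (lam + T 0 + S 0)"
proof (cases "S 0 / (lam + T 0) < 1/2")
  case True
  have "(S \<longlongrightarrow> S 0) (at_right 0)"
    using assms(4) by (simp add: isCont_def filterlim_at_split)
  moreover have "(T \<longlongrightarrow> T 0) (at_right 0)"
    using DERIV_continuous[OF T(1)] by (simp add: continuous_within)
  ultimately have "((\<lambda>t. cutoff (S t / (lam + T t)) * m / S t) has_real_derivative 0) (at_right 0)"
    using True assms by (intro profile_right_deriv_inner)
  moreover have "0 \<le> (8 * slope + 6) * m / (lam + T 0 + S 0)"
    using assms slope_nonneg by (simp add: add_pos_nonneg)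
  ultimately show ?thesis using that by simp
next
  case False
  then have half: "S 0 / (lam + T 0) \<ge> 1/2" by simp
  moreover have "lam + T 0 > 0" using assms(1,6) by (simp add: add_pos_nonneg)
  ultimately have "S 0 > 0" by (simp add: field_simps)
  then obtain S' where S': "(S has_real_derivative S') (at 0)" "\<bar>S'\<bar> \<le> 1" using S by blast
  show ?thesis
    by (rule profile_right_deriv_outer[OF assms(1,2,6) S' T half]) (rule that)
qed

lemma h0_entry_bound:
  assumes "lam > 0" "m \<ge> 0"
  shows "\<bar>h0 cutoff m lam p $ k $ l\<bar> \<le> 3 * m / (lam + \<bar>p$0\<bar> + spnorm p)"
proof (cases "k = l")
  case True
  then show ?thesis using profile_bound assms spnorm_nonneg by (simp add: h0_def)
next
  case False
  then show ?thesis using assms spnorm_nonneg by (simp add: h0_def add_pos_nonneg)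
qed

lemma h0_entry_right_deriv:
  assumes "lam > 0" "m \<ge> 0"
  obtains E where "((\<lambda>t. h0 cutoff m lam (p + t *\<^sub>R axis \<alpha> 1) $ k $ l) has_real_derivative E) (at_right 0)"
    "lam * \<bar>E\<bar> \<le> (8 * slope + 6) * m / (lam + \<bar>p$0\<bar> + spnorm p)"
proof (cases "k = l")
  case True
  obtain T' where T: "((\<lambda>t. \<bar>(p + t *\<^sub>R axis \<alpha> 1) $ 0\<bar>) has_real_derivative T') (at_right 0)" "\<bar>T'\<bar> \<le> 1"
    by (rule abs_time_line_right_deriv)
  obtain E where "((\<lambda>t. cutoff (spnorm (p + t *\<^sub>R axis \<alpha> 1) / (lam + \<bar>(p + t *\<^sub>R axis \<alpha> 1) $ 0\<bar>))
        * m / spnorm (p + t *\<^sub>R axis \<alpha> 1)) has_real_derivative E) (at_right 0)"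
      "lam * \<bar>E\<bar> \<le> (8 * slope + 6) * m / (lam + \<bar>(p + 0 *\<^sub>R axis \<alpha> 1) $ 0\<bar> + spnorm (p + 0 *\<^sub>R axis \<alpha> 1))"
    by (rule profile_right_deriv[OF assms spnorm_nonneg isCont_spnorm_line _ _ T])
       (auto elim: spnorm_line_deriv)
  then show ?thesis using that True by (simp add: h0_def)
next
  case False
  then show ?thesis
    using that[of 0] assms slope_nonneg spnorm_nonneg by (simp add: h0_def add_pos_nonneg)
qed

end

locale perturbed_metric = cutoff_function +
  fixes C0 \<gamma>0 \<epsilon>h \<delta>h lam m :: real and g :: "real^4 \<Rightarrow> real^4^4"
  assumes C0_pos: "C0 > 0" and \<gamma>0_nonneg: "\<gamma>0 \<ge> 0"
    and \<epsilon>h_pos: "\<epsilon>h > 0" and \<epsilon>h_small: "(C0 + 3) * \<epsilon>h \<le> 1/8"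
    and \<delta>h_eq: "\<delta>h = C0 * \<epsilon>h"
    and lam_pos: "lam > 0" and m_nonneg: "m \<ge> 0" and mass_small: "m / lam < \<epsilon>h"
    and lorentzian: "\<And>p. lorentzian (g p)"
    and h1_line_differentiable:
      "\<And>\<mu> \<nu> i p. (\<lambda>t. h1 cutoff m lam g (p + t *\<^sub>R axis i 1) $ \<mu> $ \<nu>) differentiable (at 0)"
    and h1_bound: "\<And>\<mu> \<nu> \<kappa> p. length \<kappa> \<le> 1 \<Longrightarrow>
      \<bar>ipd \<kappa> (\<lambda>q. h1 cutoff m lam g q $ \<mu> $ \<nu>) p\<bar>
        \<le> inverse lam ^ length \<kappa> * (\<delta>h * (1 + \<bar>p$0\<bar> / lam) powr \<delta>h
           / ((1 + (spnorm p + \<bar>p$0\<bar>) / lam) * (1 + max 0 (spnorm p - \<bar>p$0\<bar>) / lam) powr \<gamma>0))"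
begin

definition weight :: "real^4 \<Rightarrow> real" where
  "weight p = \<delta>h * (1 + \<bar>p$0\<bar> / lam) powr \<delta>h / (1 + \<bar>p$0\<bar> / lam + spnorm p / lam)"

lemma \<delta>h_pos: "\<delta>h > 0"
  using C0_pos \<epsilon>h_pos by (simp add: \<delta>h_eq)

lemma weight_denominator_pos: "1 + \<bar>p$0\<bar> / lam + spnorm p / lam > 0"
  using lam_pos spnorm_nonneg[of p] by (simp add: add_pos_nonneg)

lemma weight_pos: "weight p > 0"
proof -
  have "1 + \<bar>p$0\<bar> / lam > 0" using lam_pos by (simp add: add_pos_nonneg)
  then have "(1 + \<bar>p$0\<bar> / lam) powr \<delta>h > 0" by simp
  then show ?thesis
    unfolding weight_def using \<delta>h_pos weight_denominator_pos by (intro divide_pos_pos mult_pos_pos)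
qed

lemma weight_le_\<delta>h: "weight p \<le> \<delta>h"
proof -
  define N where "N = 1 + \<bar>p$0\<bar> / lam + spnorm p / lam"
  have "\<delta>h \<le> 1" using \<epsilon>h_small \<epsilon>h_pos C0_pos by (simp add: \<delta>h_eq algebra_simps)
  then have "(1 + \<bar>p$0\<bar> / lam) powr \<delta>h \<le> (1 + \<bar>p$0\<bar> / lam) powr 1"
    using lam_pos by (intro powr_mono) auto
  also have "\<dots> \<le> N"
    using lam_pos spnorm_nonneg[of p] by (simp add: N_def)
  finally have "\<delta>h * (1 + \<bar>p$0\<bar> / lam) powr \<delta>h \<le> \<delta>h * N"
    using \<delta>h_pos by (intro mult_left_mono) auto
  moreover have "N > 0" unfolding N_def by (rule weight_denominator_pos)
  ultimately show ?thesis by (simp add: weight_def N_def[symmetric] pos_divide_le_eq)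
qed

lemma h1_rhs_le_weight:
  "\<delta>h * (1 + \<bar>p$0\<bar> / lam) powr \<delta>h
     / ((1 + (spnorm p + \<bar>p$0\<bar>) / lam) * (1 + max 0 (spnorm p - \<bar>p$0\<bar>) / lam) powr \<gamma>0)
   \<le> weight p"
proof -
  define N where "N = 1 + \<bar>p$0\<bar> / lam + spnorm p / lam"
  define X where "X = (1 + max 0 (spnorm p - \<bar>p$0\<bar>) / lam) powr \<gamma>0"
  have "N > 0" unfolding N_def by (rule weight_denominator_pos)
  moreover have "1 \<le> X"
    unfolding X_def using lam_pos \<gamma>0_nonneg by (intro ge_one_powr_ge_zero) auto
  ultimately have "N \<le> N * X" "0 < N * X * N" by simp_all
  moreover have "1 + (spnorm p + \<bar>p$0\<bar>) / lam = N"
    by (simp add: N_def add_divide_distrib)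
  moreover have "0 \<le> \<delta>h * (1 + \<bar>p$0\<bar> / lam) powr \<delta>h" using \<delta>h_pos by simp
  ultimately show ?thesis
    unfolding weight_def N_def[symmetric] X_def[symmetric] by (metis divide_left_mono)
qed

lemma mass_term_le_weight: "m / (lam + \<bar>p$0\<bar> + spnorm p) \<le> weight p / C0"
proof -
  define N where "N = 1 + \<bar>p$0\<bar> / lam + spnorm p / lam"
  define A where "A = (1 + \<bar>p$0\<bar> / lam) powr \<delta>h"
  have N: "N > 0" "lam + \<bar>p$0\<bar> + spnorm p = lam * N"
    using weight_denominator_pos lam_pos by (auto simp: N_def field_simps)
  have "1 \<le> A" unfolding A_def using lam_pos \<delta>h_pos by (intro ge_one_powr_ge_zero) auto
  have "m / (lam + \<bar>p$0\<bar> + spnorm p) = (m / lam) / N" by (simp add: N)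
  also have "\<dots> \<le> \<epsilon>h / N" using mass_small N by (intro divide_right_mono) auto
  also have "\<dots> \<le> \<epsilon>h * A / N"
    using \<open>1 \<le> A\<close> \<epsilon>h_pos N by (intro divide_right_mono) auto
  also have "\<dots> = weight p / C0"
    unfolding weight_def A_def N_def using C0_pos by (simp add: \<delta>h_eq)
  finally show ?thesis .
qed

lemma h1_entry_bound:
  assumes "length \<kappa> \<le> 1"
  shows "\<bar>ipd \<kappa> (\<lambda>q. h1 cutoff m lam g q $ \<mu> $ \<nu>) p\<bar> \<le> inverse lam ^ length \<kappa> * weight p"
proof -
  have "inverse lam ^ length \<kappa> \<ge> 0" using lam_pos by simp
  then show ?thesis
    by (rule order_trans[OF h1_bound[OF assms] mult_left_mono[OF h1_rhs_le_weight]])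
qed

lemma h1_line_deriv:
  "((\<lambda>t. h1 cutoff m lam g (p + t *\<^sub>R axis \<alpha> 1) $ \<mu> $ \<nu>) has_real_derivative
     pd \<alpha> (\<lambda>q. h1 cutoff m lam g q $ \<mu> $ \<nu>) p) (at 0)"
  using h1_line_differentiable unfolding pd_def by (simp add: DERIV_deriv_iff_real_differentiable)

lemma metric_minus_eta_entry: "(g p - eta) $ k $ l = h1 cutoff m lam g p $ k $ l + h0 cutoff m lam p $ k $ l"
  by (simp add: h1_def)

lemma metric_entry_bound: "\<bar>(g p - eta) $ k $ l\<bar> \<le> (1 + 3 / C0) * weight p"
proof -
  have "\<bar>h1 cutoff m lam g p $ k $ l\<bar> \<le> weight p"
    using h1_entry_bound[of "[]"] by simp
  moreover have "\<bar>h0 cutoff m lam p $ k $ l\<bar> \<le> 3 * (m / (lam + \<bar>p$0\<bar> + spnorm p))"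
    using h0_entry_bound[OF lam_pos m_nonneg] by simp
  moreover have "\<dots> \<le> 3 * (weight p / C0)"
    using mass_term_le_weight by (intro mult_left_mono) auto
  ultimately show ?thesis
    unfolding metric_minus_eta_entry by (simp add: algebra_simps)
qed

lemma metric_entry_small: "\<bar>(g p - eta) $ k $ l\<bar> \<le> 1/8"
proof -
  have "(1 + 3 / C0) * weight p \<le> (1 + 3 / C0) * \<delta>h"
    using weight_le_\<delta>h C0_pos by (intro mult_left_mono) auto
  also have "\<dots> = (C0 + 3) * \<epsilon>h" using C0_pos by (simp add: \<delta>h_eq field_simps)
  finally show ?thesis using metric_entry_bound[of p k l] \<epsilon>h_small by linarith
qed

lemma metric_line_right_deriv:
  obtains E where "((\<lambda>t. g (p + t *\<^sub>R axis \<alpha> 1) $ k $ l) has_real_derivative E) (at_right 0)"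
    "lam * \<bar>E\<bar> \<le> (1 + (8 * slope + 6) / C0) * weight p"
proof -
  let ?h1 = "\<lambda>q. h1 cutoff m lam g q $ k $ l"
  obtain E0 where E0: "((\<lambda>t. h0 cutoff m lam (p + t *\<^sub>R axis \<alpha> 1) $ k $ l) has_real_derivative E0) (at_right 0)"
      "lam * \<bar>E0\<bar> \<le> (8 * slope + 6) * m / (lam + \<bar>p$0\<bar> + spnorm p)"
    by (rule h0_entry_right_deriv[OF lam_pos m_nonneg])
  have g_eq: "g q $ k $ l = ?h1 q + eta $ k $ l + h0 cutoff m lam q $ k $ l" for q
    using metric_minus_eta_entry[of q k l] by simp
  have "((\<lambda>t. g (p + t *\<^sub>R axis \<alpha> 1) $ k $ l) has_real_derivative pd \<alpha> ?h1 p + 0 + E0) (at_right 0)"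
    unfolding g_eq
    by (intro DERIV_add has_field_derivative_at_within[OF h1_line_deriv] DERIV_const E0(1))
  moreover have "lam * \<bar>pd \<alpha> ?h1 p\<bar> \<le> weight p"
    using h1_entry_bound[of "[\<alpha>]"] lam_pos by (simp add: field_simps)
  moreover have "lam * \<bar>E0\<bar> \<le> (8 * slope + 6) * (weight p / C0)"
  proof -
    have "(8 * slope + 6) * m / (lam + \<bar>p$0\<bar> + spnorm p)
        = (8 * slope + 6) * (m / (lam + \<bar>p$0\<bar> + spnorm p))" by simp
    also have "\<dots> \<le> (8 * slope + 6) * (weight p / C0)"
      using mass_term_le_weight slope_nonneg by (intro mult_left_mono) auto
    finally show ?thesis using E0(2) by linarith
  qed
  moreover have "lam * \<bar>pd \<alpha> ?h1 p + 0 + E0\<bar> \<le> lam * \<bar>pd \<alpha> ?h1 p\<bar> + lam * \<bar>E0\<bar>"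
    using lam_pos by (simp flip: distrib_left add: abs_triangle_ineq mult_left_mono)
  ultimately have "lam * \<bar>pd \<alpha> ?h1 p + 0 + E0\<bar> \<le> weight p + (8 * slope + 6) * (weight p / C0)"
    by linarith
  also have "\<dots> = (1 + (8 * slope + 6) / C0) * weight p" by (simp add: algebra_simps add_divide_distrib)
  finally show ?thesis using that \<open>(_ has_real_derivative pd \<alpha> ?h1 p + 0 + E0) _\<close> by blast
qed

lemma Hinv_eq: "Hinv g p = matrix_inv (g p) - eta"
  by (simp add: Hinv_def matrix_inv_eta)

lemma Hinv_bound: "\<bar>Hinv g p $ \<mu> $ \<nu>\<bar> \<le> 8 * (1 + 3 / C0) * weight p"
proof -
  have "\<bar>Hinv g p $ \<mu> $ \<nu>\<bar> \<le> 2 * (\<Sum>l\<in>UNIV. \<bar>(g p - eta) $ \<mu> $ l\<bar>)"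
    unfolding Hinv_eq
    by (rule matrix_inv_minus_eta_bound[OF lorentzian_imp_invertible[OF lorentzian] metric_entry_small])
  also have "\<dots> \<le> 2 * (\<Sum>l\<in>(UNIV::4 set). (1 + 3 / C0) * weight p)"
    by (intro mult_left_mono sum_mono metric_entry_bound) auto
  finally show ?thesis by (simp add: algebra_simps)
qed

lemma Hinv_line_deriv_bound:
  assumes "((\<lambda>t. Hinv g (p + t *\<^sub>R axis \<alpha> 1) $ \<mu> $ \<nu>) has_real_derivative D) (at 0)"
  shows "lam * \<bar>D\<bar> \<le> 64 * (1 + (8 * slope + 6) / C0) * weight p"
proof -
  let ?G = "\<lambda>t. g (p + t *\<^sub>R axis \<alpha> 1)"
  obtain E where E: "\<And>k l. ((\<lambda>t. ?G t $ k $ l) has_real_derivative E k l) (at_right 0)"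
      "\<And>k l. lam * \<bar>E k l\<bar> \<le> (1 + (8 * slope + 6) / C0) * weight p"
  proof -
    have "\<forall>k l. \<exists>E. ((\<lambda>t. ?G t $ k $ l) has_real_derivative E) (at_right 0)
        \<and> lam * \<bar>E\<bar> \<le> (1 + (8 * slope + 6) / C0) * weight p"
      using metric_line_right_deriv by blast
    then show ?thesis using that by metis
  qed
  have "((\<lambda>t. matrix_inv (?G t) $ \<mu> $ \<nu>) has_real_derivative D) (at_right 0)"
    using has_field_derivative_at_within[OF DERIV_add[OF assms DERIV_const[of "eta $ \<mu> $ \<nu>"]]]
    by (simp add: Hinv_eq)
  then have "\<bar>D\<bar> \<le> 4 * (\<Sum>k\<in>UNIV. \<Sum>l\<in>UNIV. \<bar>E k l\<bar>)"
    by (intro matrix_inv_deriv_bound[OF lorentzian_imp_invertible[OF lorentzian] metric_entry_small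
          trivial_limit_at_right_real E(1)])
  then have "lam * \<bar>D\<bar> \<le> lam * (4 * (\<Sum>k\<in>UNIV. \<Sum>l\<in>UNIV. \<bar>E k l\<bar>))"
    by (rule mult_left_mono) (use lam_pos in simp)
  also have "\<dots> = 4 * (\<Sum>k\<in>UNIV. \<Sum>l\<in>UNIV. lam * \<bar>E k l\<bar>)"
    by (simp add: sum_distrib_left mult.left_commute)
  also have "\<dots> \<le> 4 * (\<Sum>k\<in>(UNIV::4 set). \<Sum>l\<in>(UNIV::4 set). (1 + (8 * slope + 6) / C0) * weight p)"
    by (intro mult_left_mono sum_mono E(2)) auto
  finally show ?thesis by (simp add: algebra_simps)
qed

lemma Hinv_estimates:
  fixes K :: real
  defines "K \<equiv> 8 * (1 + 3 / C0) + 64 * (1 + (8 * slope + 6) / C0)"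
  shows "\<bar>Hinv g p $ \<mu> $ \<nu>\<bar>
      \<le> K * \<delta>h * (1 + \<bar>p$0\<bar> / lam) powr \<delta>h / (1 + \<bar>p$0\<bar> / lam + spnorm p / lam)
    \<and> (\<forall>D. ((\<lambda>t. Hinv g (p + t *\<^sub>R axis \<alpha> 1) $ \<mu> $ \<nu>) has_real_derivative D) (at 0) \<longrightarrow>
      \<bar>Hinv g p $ \<mu> $ \<nu>\<bar> + lam * \<bar>D\<bar>
        \<le> K * \<delta>h * (1 + \<bar>p$0\<bar> / lam) powr \<delta>h / (1 + \<bar>p$0\<bar> / lam + spnorm p / lam))"
proof -
  have "K * \<delta>h * (1 + \<bar>p$0\<bar> / lam) powr \<delta>h / (1 + \<bar>p$0\<bar> / lam + spnorm p / lam) = K * weight p"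
    by (simp add: weight_def)
  also have "\<dots> = 8 * (1 + 3 / C0) * weight p + 64 * (1 + (8 * slope + 6) / C0) * weight p"
    by (simp add: K_def algebra_simps)
  finally have weight: "K * \<delta>h * (1 + \<bar>p$0\<bar> / lam) powr \<delta>h / (1 + \<bar>p$0\<bar> / lam + spnorm p / lam)
      = 8 * (1 + 3 / C0) * weight p + 64 * (1 + (8 * slope + 6) / C0) * weight p" .
  have "0 \<le> 64 * (1 + (8 * slope + 6) / C0) * weight p"
    using C0_pos slope_nonneg weight_pos[of p] by simp
  then show ?thesis
    unfolding weight
  proof (intro conjI allI impI)
    fix D
    assume "((\<lambda>t. Hinv g (p + t *\<^sub>R axis \<alpha> 1) $ \<mu> $ \<nu>) has_real_derivative D) (at 0)"
    then show "\<bar>Hinv g p $ \<mu> $ \<nu>\<bar> + lam * \<bar>D\<bar>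
        \<le> 8 * (1 + 3 / C0) * weight p + 64 * (1 + (8 * slope + 6) / C0) * weight p"
      by (intro add_mono Hinv_bound Hinv_line_deriv_bound)
  qed (use Hinv_bound[of p \<mu> \<nu>] in linarith)
qed

end

theorem corollary3p2:
  fixes cutoff :: "real \<Rightarrow> real" and C0 \<gamma>0 :: real
  assumes "smooth_fun cutoff"
    and "\<forall>s. 0 \<le> cutoff s \<and> cutoff s \<le> 1"
    and "\<forall>s\<in>{0..1/2}. cutoff s = 0"
    and "\<forall>s\<ge>3/4. cutoff s = 1"
    and "C0 > 0" and "3/4 \<le> \<gamma>0" and "\<gamma>0 < 1"
  shows "\<exists>\<epsilon>0>0. \<exists>C. \<forall>\<epsilon>h \<delta>h lam G c M g.
    0 < \<epsilon>h \<and> \<epsilon>h < \<epsilon>0 \<and> \<delta>h = C0 * \<epsilon>h \<and> 0 < lam \<and> 0 < G \<and> 0 < c \<and> 0 \<le> M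
    \<and> G * M / (c^2 * lam) < \<epsilon>h
    \<and> (\<forall>p. lorentzian (g p))
    \<and> (\<forall>\<mu> \<nu> \<kappa> i p. length \<kappa> < 4 \<longrightarrow>
          (\<lambda>t. ipd \<kappa> (\<lambda>q. h1 cutoff (G * M / c^2) lam g q $ \<mu> $ \<nu>) (p + t *\<^sub>R axis i 1))
            differentiable (at 0))
    \<and> (\<forall>\<mu> \<nu> \<kappa> p. length \<kappa> \<le> 4 \<longrightarrow>
          \<bar>ipd \<kappa> (\<lambda>q. h1 cutoff (G * M / c^2) lam g q $ \<mu> $ \<nu>) p\<bar>
          \<le> inverse lam ^ length \<kappa> * (\<delta>h * (1 + \<bar>p$0\<bar> / lam) powr \<delta>h
             / ((1 + (spnorm p + \<bar>p$0\<bar>) / lam)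
                * (1 + max 0 (spnorm p - \<bar>p$0\<bar>) / lam) powr \<gamma>0)))
    \<longrightarrow> (\<forall>p \<mu> \<nu> \<alpha>.
          \<bar>Hinv g p $ \<mu> $ \<nu>\<bar>
            \<le> C * \<delta>h * (1 + \<bar>p$0\<bar> / lam) powr \<delta>h / (1 + \<bar>p$0\<bar> / lam + spnorm p / lam)
        \<and> (\<forall>D. ((\<lambda>t. Hinv g (p + t *\<^sub>R axis \<alpha> 1) $ \<mu> $ \<nu>) has_real_derivative D) (at 0) \<longrightarrow>
             \<bar>Hinv g p $ \<mu> $ \<nu>\<bar> + lam * \<bar>D\<bar>
               \<le> C * \<delta>h * (1 + \<bar>p$0\<bar> / lam) powr \<delta>h / (1 + \<bar>p$0\<bar> / lam + spnorm p / lam)))"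
proof -
  interpret cutoff_function cutoff using assms(1-4) by unfold_locales auto
  define \<epsilon>0 where "\<epsilon>0 = 1 / (8 * (C0 + 3))"
  have metric: "perturbed_metric cutoff C0 \<gamma>0 \<epsilon>h \<delta>h lam (G * M / c^2) g"
    if "0 < \<epsilon>h" "\<epsilon>h < \<epsilon>0" "\<delta>h = C0 * \<epsilon>h" "0 < lam" "0 < G" "0 < c" "0 \<le> M"
      "G * M / (c^2 * lam) < \<epsilon>h" "\<forall>p. lorentzian (g p)"
      and differentiable: "\<forall>\<mu> \<nu> \<kappa> i p. length \<kappa> < 4 \<longrightarrow>
          (\<lambda>t. ipd \<kappa> (\<lambda>q. h1 cutoff (G * M / c^2) lam g q $ \<mu> $ \<nu>) (p + t *\<^sub>R axis i 1))
            differentiable (at 0)"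
      and bound: "\<forall>\<mu> \<nu> \<kappa> p. length \<kappa> \<le> 4 \<longrightarrow>
          \<bar>ipd \<kappa> (\<lambda>q. h1 cutoff (G * M / c^2) lam g q $ \<mu> $ \<nu>) p\<bar>
          \<le> inverse lam ^ length \<kappa> * (\<delta>h * (1 + \<bar>p$0\<bar> / lam) powr \<delta>h
             / ((1 + (spnorm p + \<bar>p$0\<bar>) / lam)
                * (1 + max 0 (spnorm p - \<bar>p$0\<bar>) / lam) powr \<gamma>0))"
    for \<epsilon>h \<delta>h lam G c M g
  proof unfold_locales
    show "(C0 + 3) * \<epsilon>h \<le> 1/8"
      using that(2) assms(5) by (simp add: \<epsilon>0_def field_simps)
    show "G * M / c^2 / lam < \<epsilon>h" using that(8) by (simp add: field_simps)
    show "(\<lambda>t. h1 cutoff (G * M / c^2) lam g (p + t *\<^sub>R axis i 1) $ \<mu> $ \<nu>) differentiable (at 0)"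
      for \<mu> \<nu> i p using differentiable[rule_format, of "[]"] by simp
  qed (use that assms(5,6) bound in auto)
  show ?thesis
  proof (rule exI[of _ \<epsilon>0], rule conjI)
    show "\<epsilon>0 > 0" using assms(5) by (simp add: \<epsilon>0_def)
  qed (rule exI, intro allI impI, elim conjE, rule perturbed_metric.Hinv_estimates[OF metric]; assumption)
qed

end
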